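(* Consider the Gaussian mean estimation problem described in the context, with any $n\ge1$. Then both quantities $$\mathbb E\Big[\Psi^{*-1}_{\tilde E|Z^\pm_{[n]}}\big(I_{Z^\pm_{[n]}}(W;R_{[n]})\big)\Big]\quad\text{and}\quad \frac1n\sum_{i=1}^n\mathbb E\Big[\Psi^{*-1}_{\tilde E_i|Z^\pm_{[n]}}\big(I_{Z^\pm_{[n]}}(W;R_i)\big)\Big]$$ are at least $\dfrac{\sigma^2}{\pi\sqrt{\log_2 e}}$.
   Context: Gaussian mean estimation: data space $\mathcal Z=\mathbb R$, $\xi=N(\mu,\sigma^2)$ for some $\mu\in\mathbb R$, $\sigma>0$; parameter space $\mathcal W=\mathbb R$; loss $\ell(w,z)=(w-z)^2$; the algorithm deterministically outputs the average of its $n$ training samples. Supersample construction: $Z_i^-,Z_i^+$ ($i=1,\dots,n$) are $2n$ i.i.d. samples from $\xi$, $Z_i^\pm=(Z_i^-,Z_i^+)$, $Z^\pm_{[n]}=(Z_1^\pm,\dots,Z_n^\pm)$; $R_{[n]}=(R_1,\dots,R_n)$ i.i.d. uniform on $\{-1,1\}$ independent of the samples; $W=\frac1n\sum_{i=1}^n Z_i^{R_i}$ with $Z_i^{1}=Z_i^+$, $Z_i^{-1}=Z_i^-$. Let $(\tilde R_{[n]},\tilde W)$ be a decoupled pair of $(R_{[n]},W)$ conditioned on $Z^\pm_{[n]}$, i.e. jointly defined with $Z^\pm_{[n]}$ so that $(\tilde R_{[n]},Z^\pm_{[n]})\overset{D}{=}(R_{[n]},Z^\pm_{[n]})$, $(\tilde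 W,Z^\pm_{[n]})\overset{D}{=}(W,Z^\pm_{[n]})$, and $\tilde R_{[n]}-Z^\pm_{[n]}-\tilde W$ is a Markov chain. Define $\tilde E_i=\tilde R_i(\ell(\tilde W,Z_i^-)-\ell(\tilde W,Z_i^+))$ and $\tilde E=\frac1n\sum_{i=1}^n\tilde E_i$. $I_{U}(X;Y)$ denotes $I(X;Y\mid U=u)$ evaluated at $u=U$; mutual information in nats. For random variables $F,U$: $\psi_{F|U}(\lambda,u)=\ln\mathbb E[e^{\lambda(F-\mathbb E[F|U=u])}\mid U=u]$, $\psi^{*-1}_{F|U}(\eta,u)=\inf_{\lambda>0}\frac{\eta+\psi_{F|U}(\lambda,u)}{\lambda}$, and $\Psi^{*-1}_{F|U}(\eta)=\psi^{*-1}_{F|U}(\eta,U)$. *)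

theory Defs
  imports "HOL-Probability.Probability"
begin

text \<open>Gaussian mean estimation with the supersample construction.
  Indices run over 1..n. A supersample is z :: nat => real * real with
  z i = (Z_i^-, Z_i^+). Selector r_i in {-1,1}.\<close>

definition loss :: "real \<Rightarrow> real \<Rightarrow> real" where
  "loss w x = (w - x)^2"

definition sel :: "real \<times> real \<Rightarrow> real \<Rightarrow> real" where
  "sel p r = (if r = 1 then snd p else fst p)"

definition Rdist :: "nat \<Rightarrow> (nat \<Rightarrow> real) pmf" where
  "Rdist n = pmf_of_set (PiE {1..n} (\<lambda>_. {-1, 1}))"

definition Wout :: "nat \<Rightarrow> (nat \<Rightarrow> real \<times> real) \<Rightarrow> (nat \<Rightarrow> real) \<Rightarrow> real" where
  "Wout n z r = (\<Sum>i=1..n. sel (z i) (r i)) / real n"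

definition Wdist :: "nat \<Rightarrow> (nat \<Rightarrow> real \<times> real) \<Rightarrow> real pmf" where
  "Wdist n z = map_pmf (Wout n z) (Rdist n)"

text \<open>Conditional joint law of the decoupled pair (R~, W~) given Z^pm = z:
  by the Markov chain condition they are conditionally independent with the
  conditional marginals of R and W.\<close>
definition decoupled :: "nat \<Rightarrow> (nat \<Rightarrow> real \<times> real) \<Rightarrow> ((nat \<Rightarrow> real) \<times> real) pmf" where
  "decoupled n z = pair_pmf (Rdist n) (Wdist n z)"

definition Etil_i :: "(nat \<Rightarrow> real \<times> real) \<Rightarrow> nat \<Rightarrow> (nat \<Rightarrow> real) \<Rightarrow> real \<Rightarrow> real" where
  "Etil_i z i r w = r i * (loss w (fst (z i)) - loss w (snd (z i)))"

definition Etil :: "nat \<Rightarrow> (nat \<Rightarrow> real \<times> real) \<Rightarrow> (nat \<Rightarrow> real) \<Rightarrow> real \<Rightarrow> real" where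
  "Etil n z r w = (\<Sum>i=1..n. Etil_i z i r w) / real n"

text \<open>Mutual information (nats) of a discrete joint law.\<close>
definition mutual_info_pmf :: "('a \<times> 'b) pmf \<Rightarrow> real" where
  "mutual_info_pmf p = measure_pmf.expectation p
     (\<lambda>(x, y). ln (pmf p (x, y) / (pmf (map_pmf fst p) x * pmf (map_pmf snd p) y)))"

text \<open>Conditional cumulant generating function psi_{F|U}(l,u), where F is the
  conditional law of F given U = u.\<close>
definition cgf :: "real pmf \<Rightarrow> real \<Rightarrow> real" where
  "cgf F l = ln (measure_pmf.expectation F
      (\<lambda>x. exp (l * (x - measure_pmf.expectation F (\<lambda>y. y)))))"

definition cgf_star_inv :: "real pmf \<Rightarrow> real \<Rightarrow> real" where
  "cgf_star_inv F \<eta> = (INF l\<in>{0<..}. (\<eta> + cgf F l) / l)"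

definition gauss :: "real \<Rightarrow> real \<Rightarrow> real measure" where
  "gauss \<mu> \<sigma> = density lborel (normal_density \<mu> \<sigma>)"

definition supersample :: "nat \<Rightarrow> real \<Rightarrow> real \<Rightarrow> (nat \<Rightarrow> real \<times> real) measure" where
  "supersample n \<mu> \<sigma> = PiM {1..n} (\<lambda>_. gauss \<mu> \<sigma> \<Otimes>\<^sub>M gauss \<mu> \<sigma>)"

end

theory Submission
  imports Defs
begin

text \<open>
  Fix the supersample \<open>z\<close> and write \<open>X\<^sub>i(w) = loss(w, Z\<^sub>i\<^sup>-) - loss(w, Z\<^sub>i\<^sup>+)
  = (Z\<^sub>i\<^sup>+ - Z\<^sub>i\<^sup>-) (2 w - Z\<^sub>i\<^sup>- - Z\<^sub>i\<^sup>+)\<close>. The decoupled \<open>R\<close> is a uniform sign vector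
  independent of \<open>W\<close>, so \<open>E\<close> has mean zero, and for every value \<open>w\<close> of \<open>W\<close> one sign vector
  turns every summand \<open>r\<^sub>i X\<^sub>i(w)\<close> into \<open>\<bar>X\<^sub>i(w)\<bar>\<close>. Hence, by Jensen in \<open>W\<close>,
  \<open>\<psi>(\<lambda>) \<ge> \<lambda> G - n ln 2\<close> for the full gap and \<open>\<psi>\<^sub>i(\<lambda>) \<ge> \<lambda> G\<^sub>i - ln 2\<close> for the
  single ones, where \<open>G\<^sub>i = E\<^sub>R \<bar>X\<^sub>i(W)\<bar>\<close> and \<open>G\<close> is their average. Almost surely the \<open>2\<^sup>n\<close>
  possible outputs are distinct, so \<open>W\<close> determines \<open>R\<close> and the mutual informations are exactly
  \<open>n ln 2\<close> and \<open>ln 2\<close>: they cancel these constants in \<open>\<psi>\<^sup>*\<^sup>-\<^sup>1\<close>, which is therefore at least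
  \<open>G\<close>, resp. \<open>G\<^sub>i\<close>. Finally \<open>G\<^sub>i \<ge> \<bar>X\<^sub>i(E\<^sub>R W)\<bar>\<close>, whose expectation over the Gaussian
  supersample is at least \<open>(1 - 1/n) (2 - 4/\<pi>) \<sigma>\<^sup>2\<close> for \<open>n \<ge> 2\<close>; for \<open>n = 1\<close>,
  \<open>G\<^sub>1 = (Z\<^sub>1\<^sup>+ - Z\<^sub>1\<^sup>-)\<^sup>2\<close> has expectation \<open>2 \<sigma>\<^sup>2\<close>. Both exceed \<open>\<sigma>\<^sup>2/\<pi>\<close>.
\<close>

lemma exp_mean_le_mean_exp:
  assumes "finite S" "S \<noteq> {}"
  shows "exp ((\<Sum>x\<in>S. f x) / card S) \<le> (\<Sum>x\<in>S. exp (f x)) / card S"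
  using convex_on_sum[OF assms exp_convex, of "\<lambda>_. 1 / card S" f] assms
  by (simp add: sum_divide_distrib)

lemma ln_double_mean_exp_ge:
  assumes S: "finite S" "S \<noteq> {}" and "0 < c"
    and bound: "\<And>t. t \<in> S \<Longrightarrow> c * exp (a t) \<le> (\<Sum>s\<in>S. exp (h s t)) / card S"
  shows "(\<Sum>t\<in>S. a t) / card S + ln c \<le> ln ((\<Sum>s\<in>S. \<Sum>t\<in>S. exp (h s t)) / card S ^ 2)"
proof -
  have "exp ((\<Sum>t\<in>S. a t) / card S + ln c) = c * exp ((\<Sum>t\<in>S. a t) / card S)"
    using \<open>0 < c\<close> by (simp add: exp_add)
  also have "\<dots> \<le> c * ((\<Sum>t\<in>S. exp (a t)) / card S)"
    using \<open>0 < c\<close> by (intro mult_left_mono exp_mean_le_mean_exp S) auto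
  also have "\<dots> = (\<Sum>t\<in>S. c * exp (a t)) / card S"
    by (simp add: sum_distrib_left)
  also have "\<dots> \<le> (\<Sum>t\<in>S. (\<Sum>s\<in>S. exp (h s t)) / card S) / card S"
    by (intro divide_right_mono sum_mono bound) auto
  also have "\<dots> = (\<Sum>s\<in>S. \<Sum>t\<in>S. exp (h s t)) / card S ^ 2"
    by (subst sum.swap) (simp add: sum_divide_distrib[symmetric] power2_eq_square)
  finally show ?thesis
    by (subst ln_ge_iff) (auto intro: less_le_trans[OF exp_gt_zero])
qed

lemma ennreal_le_mean:
  assumes "1 \<le> n" and "\<And>i. i \<in> {1..n} \<Longrightarrow> ennreal c \<le> a i"
  shows "ennreal c \<le> ennreal (1 / real n) * (\<Sum>i=1..n. a i)"
proof -
  have "ennreal c = ennreal (1 / real n) * (\<Sum>i=1..n. ennreal c)"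
    using assms(1) by (simp add: ennreal_of_nat_eq_real_of_nat ennreal_mult'[symmetric])
  also have "\<dots> \<le> ennreal (1 / real n) * (\<Sum>i=1..n. a i)"
    by (intro mult_left_mono sum_mono assms(2)) auto
  finally show ?thesis .
qed

lemma has_bochner_integral_distr_eq:
  fixes f :: "'b \<Rightarrow> real"
  assumes "distr M N g = N" "g \<in> measurable M N" "f \<in> borel_measurable N"
    and "has_bochner_integral N f c"
  shows "has_bochner_integral M (\<lambda>x. f (g x)) c"
proof -
  from assms(4) have "has_bochner_integral (distr M N g) f c"
    unfolding assms(1) .
  then show ?thesis
    using assms(2,3) by (simp add: has_bochner_integral_iff integrable_distr_eq integral_distr)
qed

lemma has_bochner_integral_PiM_sum:
  fixes f :: "'a \<Rightarrow> real" and c :: real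
  assumes "prob_space M" "finite I" "f \<in> borel_measurable M" "has_bochner_integral M f c"
  shows "has_bochner_integral (PiM I (\<lambda>_. M)) (\<lambda>x. \<Sum>j\<in>I. f (x j)) (card I * c)"
proof -
  have "has_bochner_integral (PiM I (\<lambda>_. M)) (\<lambda>x. f (x j)) c" if "j \<in> I" for j
  proof (rule has_bochner_integral_distr_eq[OF _ _ assms(3,4)])
    show "distr (PiM I (\<lambda>_. M)) M (\<lambda>x. x j) = M"
      using assms(1) that by (rule distr_PiM_component)
    show "(\<lambda>x. x j) \<in> measurable (PiM I (\<lambda>_. M)) M"
      using that by (rule measurable_component_singleton)
  qed
  then have "has_bochner_integral (PiM I (\<lambda>_. M)) (\<lambda>x. \<Sum>j\<in>I. f (x j)) (\<Sum>j\<in>I. c)"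
    by (rule has_bochner_integral_sum)
  then show ?thesis
    by simp
qed

lemma (in prob_space) abs_affine_mean_le_nn_integral:
  fixes T :: "'a \<Rightarrow> real"
  assumes "has_bochner_integral M T m"
  shows "ennreal \<bar>a * m + b\<bar> \<le> (\<integral>\<^sup>+x. ennreal \<bar>a * T x + b\<bar> \<partial>M)"
proof -
  have "has_bochner_integral M (\<lambda>x. a * T x + b) (a * m + b)"
    using assms by (intro has_bochner_integral_add has_bochner_integral_mult_right)
      (simp_all add: has_bochner_integral_iff prob_space)
  then show ?thesis
    using integral_norm_bound_ennreal[of M "\<lambda>x. a * T x + b"]
    by (simp add: has_bochner_integral_iff)
qed

lemma (in product_sigma_finite) nn_integral_PiM_split_coord:
  assumes "finite I" "i \<in> I" "f \<in> borel_measurable (PiM I M)"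
  shows "(\<integral>\<^sup>+x. f x \<partial>PiM I M) = (\<integral>\<^sup>+y. \<integral>\<^sup>+x. f (x(i := y)) \<partial>PiM (I - {i}) M \<partial>M i)"
  using product_nn_integral_insert_rev[of "I - {i}" i f] assms by (simp add: insert_absorb)

lemma (in product_sigma_finite) AE_PiM_split_coord:
  assumes "finite I" "i \<in> I" and B: "{x \<in> space (PiM I M). \<not> P x} \<in> sets (PiM I M)"
    and slices: "\<And>x. AE y in M i. P (x(i := y))"
  shows "AE x in PiM I M. P x"
proof (rule AE_I'[OF _ order_refl])
  let ?B = "{x \<in> space (PiM I M). \<not> P x}"
  have "(\<integral>\<^sup>+y. indicator ?B (x(i := y)) \<partial>M i) = 0" for x
  proof -
    have "AE y in M i. indicator ?B (x(i := y)) = (0 :: ennreal)"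
      using slices[of x] by eventually_elim simp
    then have "(\<integral>\<^sup>+y. indicator ?B (x(i := y)) \<partial>M i) = (\<integral>\<^sup>+y. 0 \<partial>M i)"
      by (rule nn_integral_cong_AE)
    then show ?thesis
      by simp
  qed
  then have "(\<integral>\<^sup>+x. \<integral>\<^sup>+y. indicator ?B (x(i := y)) \<partial>M i \<partial>PiM (I - {i}) M) = 0"
    by simp
  then have "emeasure (PiM I M) ?B = 0"
    using product_nn_integral_insert[of "I - {i}" i "indicator ?B"] assms
    by (simp add: insert_absorb)
  then show "?B \<in> null_sets (PiM I M)"
    using B by (intro null_setsI)
qed

lemma mutual_info_pmf_of_set_inj:
  assumes S: "finite S" "S \<noteq> {}" and "inj_on f S"
    and marginal: "\<And>x. x \<in> S \<Longrightarrow> pmf (map_pmf g (pmf_of_set S)) (g x) = c"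
  shows "mutual_info_pmf (map_pmf (\<lambda>x. (f x, g x)) (pmf_of_set S)) = - ln c"
proof -
  let ?p = "map_pmf (\<lambda>x. (f x, g x)) (pmf_of_set S)"
  have "ln (pmf ?p (f x, g x) / (pmf (map_pmf fst ?p) (f x) * pmf (map_pmf snd ?p) (g x))) = - ln c"
    if x: "x \<in> S" for x
  proof -
    have "pmf ?p (f x, g x) = 1 / card S"
      using x S \<open>inj_on f S\<close> by (subst pmf_map_inj) (auto intro: inj_onI dest: inj_onD)
    moreover have "pmf (map_pmf fst ?p) (f x) = 1 / card S"
      using x S \<open>inj_on f S\<close> by (simp add: map_pmf_comp pmf_map_inj)
    moreover have "pmf (map_pmf snd ?p) (g x) = c"
      using marginal[OF x] by (simp add: map_pmf_comp)
    ultimately show ?thesis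
      using S by (simp add: ln_inverse[symmetric] ln_div)
  qed
  then show ?thesis
    unfolding mutual_info_pmf_def using S by (simp add: integral_pmf_of_set)
qed

lemma cgf_star_inv_ge:
  assumes "\<And>l. 0 < l \<Longrightarrow> l * G - \<eta> \<le> cgf F l"
  shows "G \<le> cgf_star_inv F \<eta>"
  unfolding cgf_star_inv_def
proof (rule cINF_greatest)
  fix l :: real assume "l \<in> {0<..}"
  with assms[of l] show "G \<le> (\<eta> + cgf F l) / l"
    by (simp add: field_simps)
qed auto

section \<open>Sign vectors\<close>

definition sign_vectors :: "nat \<Rightarrow> (nat \<Rightarrow> real) set" where
  "sign_vectors n = PiE {1..n} (\<lambda>_. {-1, 1})"

lemma Rdist_eq_pmf_of_set: "Rdist n = pmf_of_set (sign_vectors n)"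
  unfolding Rdist_def sign_vectors_def ..

lemma finite_sign_vectors [simp]: "finite (sign_vectors n)"
  unfolding sign_vectors_def by (intro finite_PiE) auto

lemma sign_vectors_nonempty [simp]: "sign_vectors n \<noteq> {}"
  unfolding sign_vectors_def by (simp add: PiE_eq_empty_iff)

lemma card_sign_vectors_pos [simp]: "0 < card (sign_vectors n)"
  by (simp add: card_gt_0_iff)

lemma sign_vectors_coord: "r \<in> sign_vectors n \<Longrightarrow> i \<in> {1..n} \<Longrightarrow> r i = -1 \<or> r i = 1"
  unfolding sign_vectors_def by (auto simp: PiE_iff)

lemma sum_sign_vectors_flip:
  assumes "i \<in> {1..n}"
  shows "(\<Sum>r\<in>sign_vectors n. g r) = (\<Sum>r\<in>sign_vectors n. g (r(i := - r i)))"
  by (rule sum.reindex_bij_witness[where i="\<lambda>r. r(i := - r i)" and j="\<lambda>r. r(i := - r i)"])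
     (use assms in \<open>auto simp: sign_vectors_def PiE_iff extensional_def\<close>)

lemma sum_sign_vectors_coord:
  assumes "i \<in> {1..n}"
  shows "(\<Sum>r\<in>sign_vectors n. r i) = 0"
  using sum_sign_vectors_flip[OF assms, of "\<lambda>r. r i"] by (simp add: sum_negf)

lemma card_sign_vectors_coord_eq:
  assumes "i \<in> {1..n}" and "s = -1 \<or> s = 1"
  shows "real (card {r \<in> sign_vectors n. r i = s}) = card (sign_vectors n) / 2"
proof -
  have "real (card {r \<in> sign_vectors n. r i = s}) = (\<Sum>r\<in>sign_vectors n. if r i = s then 1 else 0)"
    by (simp add: sum.inter_filter[symmetric])
  also have "\<dots> = (\<Sum>r\<in>sign_vectors n. 1 / 2 + s / 2 * r i)"
    using assms(2) by (intro sum.cong refl) (auto dest!: sign_vectors_coord[OF _ assms(1)])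
  also have "\<dots> = card (sign_vectors n) / 2"
    by (simp add: sum.distrib sum_divide_distrib[symmetric] sum_distrib_left[symmetric]
        sum_sign_vectors_coord[OF assms(1)])
  finally show ?thesis .
qed

lemma exp_sum_abs_le_sum_sign_vectors:
  "exp (\<Sum>i=1..n. \<bar>x i\<bar>) \<le> (\<Sum>r\<in>sign_vectors n. exp (\<Sum>i=1..n. r i * x i))"
proof -
  define s where "s = restrict (\<lambda>i. if x i < 0 then -1 else 1 :: real) {1..n}"
  have "s \<in> sign_vectors n"
    unfolding s_def sign_vectors_def by auto
  moreover have "(\<Sum>i=1..n. \<bar>x i\<bar>) = (\<Sum>i=1..n. s i * x i)"
    unfolding s_def by (intro sum.cong) auto
  ultimately show ?thesis
    by (auto intro: member_le_sum)
qed

lemma sum_sign_vectors_exp_coord_ge: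
  assumes "i \<in> {1..n}"
  shows "card (sign_vectors n) * exp \<bar>x\<bar> \<le> 2 * (\<Sum>r\<in>sign_vectors n. exp (r i * x))"
proof -
  have "card (sign_vectors n) * exp \<bar>x\<bar> = (\<Sum>r\<in>sign_vectors n. exp \<bar>x\<bar>)"
    by simp
  also have "\<dots> \<le> (\<Sum>r\<in>sign_vectors n. exp (r i * x) + exp (- (r i * x)))"
  proof (rule sum_mono)
    fix r assume "r \<in> sign_vectors n"
    then have "\<bar>x\<bar> = r i * x \<or> \<bar>x\<bar> = - (r i * x)"
      by (auto dest!: sign_vectors_coord[OF _ assms] simp: abs_if)
    then show "exp \<bar>x\<bar> \<le> exp (r i * x) + exp (- (r i * x))"
      by (metis add_increasing add_increasing2 exp_ge_zero order_refl)
  qed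
  also have "\<dots> = 2 * (\<Sum>r\<in>sign_vectors n. exp (r i * x))"
    using sum_sign_vectors_flip[OF assms, of "\<lambda>r. exp (r i * x)"] by (simp add: sum.distrib)
  finally show ?thesis .
qed

definition loss_gap :: "real \<times> real \<Rightarrow> real \<Rightarrow> real" where
  "loss_gap p w = (snd p - fst p) * (2 * w - fst p - snd p)"

lemma Etil_i_eq: "Etil_i z i r w = r i * loss_gap (z i) w"
  unfolding Etil_i_def loss_def loss_gap_def by (simp add: power2_eq_square algebra_simps)

lemma Etil_eq: "Etil n z r w = (\<Sum>i=1..n. r i * loss_gap (z i) w) / n"
  unfolding Etil_def Etil_i_eq ..

definition supersample_mean :: "nat \<Rightarrow> (nat \<Rightarrow> real \<times> real) \<Rightarrow> real" where
  "supersample_mean n z = (\<Sum>j=1..n. fst (z j) + snd (z j)) / (2 * n)"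

lemma sum_sign_vectors_Wout:
  assumes "n \<ge> 1"
  shows "(\<Sum>r\<in>sign_vectors n. Wout n z r) = card (sign_vectors n) * supersample_mean n z"
proof -
  have sel: "(\<Sum>r\<in>sign_vectors n. sel (z j) (r j))
      = card (sign_vectors n) * ((fst (z j) + snd (z j)) / 2)"
    if j: "j \<in> {1..n}" for j
  proof -
    have "(\<Sum>r\<in>sign_vectors n. sel (z j) (r j))
        = (\<Sum>r\<in>sign_vectors n. (fst (z j) + snd (z j)) / 2 + (snd (z j) - fst (z j)) / 2 * r j)"
      by (intro sum.cong refl) (auto dest!: sign_vectors_coord[OF _ j] simp: sel_def field_simps)
    then show ?thesis
      by (simp add: sum.distrib sum_divide_distrib[symmetric] sum_distrib_left[symmetric]
          sum_sign_vectors_coord[OF j])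
  qed
  have "(\<Sum>r\<in>sign_vectors n. Wout n z r) = (\<Sum>j=1..n. \<Sum>r\<in>sign_vectors n. sel (z j) (r j)) / n"
    unfolding Wout_def sum_divide_distrib[symmetric] by (subst sum.swap) (rule refl)
  also have "\<dots> = card (sign_vectors n) * supersample_mean n z"
    using assms by (simp add: sel supersample_mean_def sum_distrib_left
        sum_divide_distrib[symmetric])
  finally show ?thesis .
qed

definition mean_abs_loss_gap :: "nat \<Rightarrow> (nat \<Rightarrow> real \<times> real) \<Rightarrow> nat \<Rightarrow> real" where
  "mean_abs_loss_gap n z i =
     (\<Sum>r\<in>sign_vectors n. \<bar>loss_gap (z i) (Wout n z r)\<bar>) / card (sign_vectors n)"

lemma mean_abs_loss_gap_nonneg: "0 \<le> mean_abs_loss_gap n z i"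
  unfolding mean_abs_loss_gap_def by (intro divide_nonneg_nonneg sum_nonneg) auto

lemma abs_loss_gap_supersample_mean_le:
  assumes "n \<ge> 1"
  shows "\<bar>loss_gap (z i) (supersample_mean n z)\<bar> \<le> mean_abs_loss_gap n z i"
proof -
  let ?N = "real (card (sign_vectors n))"
  have affine: "loss_gap p w = 2 * (snd p - fst p) * w - (snd p - fst p) * (fst p + snd p)" for p w
    unfolding loss_gap_def by (simp add: algebra_simps)
  have "(\<Sum>r\<in>sign_vectors n. loss_gap (z i) (Wout n z r))
      = ?N * loss_gap (z i) (supersample_mean n z)"
    unfolding affine sum_subtractf sum_distrib_left[symmetric] sum_sign_vectors_Wout[OF assms]
    by (simp add: algebra_simps)
  then have "\<bar>loss_gap (z i) (supersample_mean n z)\<bar>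
      = \<bar>\<Sum>r\<in>sign_vectors n. loss_gap (z i) (Wout n z r)\<bar> / ?N"
    by (simp add: abs_mult)
  also have "\<dots> \<le> mean_abs_loss_gap n z i"
    unfolding mean_abs_loss_gap_def by (intro divide_right_mono sum_abs) auto
  finally show ?thesis .
qed

lemma mean_abs_loss_gap_one: "mean_abs_loss_gap 1 z 1 = (snd (z 1) - fst (z 1))^2"
proof -
  have "loss_gap (z 1) (Wout 1 z r) = r 1 * (snd (z 1) - fst (z 1))^2" if "r \<in> sign_vectors 1" for r
    using sign_vectors_coord[OF that, of 1]
    by (auto simp: Wout_def sel_def loss_gap_def power2_eq_square algebra_simps)
  moreover have "\<bar>r 1\<bar> = 1" if "r \<in> sign_vectors 1" for r
    using sign_vectors_coord[OF that, of 1] by auto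
  ultimately show ?thesis
    unfolding mean_abs_loss_gap_def by (simp add: abs_mult)
qed

section \<open>Cumulant generating functions and mutual informations given the supersample\<close>

lemma expectation_decoupled:
  "measure_pmf.expectation (map_pmf h (decoupled n z)) g =
     (\<Sum>r\<in>sign_vectors n. \<Sum>r'\<in>sign_vectors n. g (h (r, Wout n z r'))) / card (sign_vectors n) ^ 2"
proof -
  let ?S = "sign_vectors n"
  have "decoupled n z = map_pmf (apsnd (Wout n z)) (pair_pmf (pmf_of_set ?S) (pmf_of_set ?S))"
    unfolding decoupled_def Wdist_def Rdist_eq_pmf_of_set by (simp add: pair_map_pmf2)
  then have "measure_pmf.expectation (map_pmf h (decoupled n z)) g =
      measure_pmf.expectation (pair_pmf (pmf_of_set ?S) (pmf_of_set ?S))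
        (\<lambda>x. g (h (apsnd (Wout n z) x)))"
    by (simp add: map_pmf_comp)
  also have "\<dots> = (\<Sum>x\<in>?S \<times> ?S.
      pmf (pair_pmf (pmf_of_set ?S) (pmf_of_set ?S)) x * g (h (apsnd (Wout n z) x)))"
    by (subst integral_measure_pmf[where A="?S \<times> ?S"]) auto
  also have "\<dots> = (\<Sum>x\<in>?S \<times> ?S. g (h (apsnd (Wout n z) x)) / card ?S ^ 2)"
    by (intro sum.cong refl) (auto simp: pmf_pair power2_eq_square)
  also have "\<dots> = (\<Sum>r\<in>?S. \<Sum>r'\<in>?S. g (h (r, Wout n z r'))) / card ?S ^ 2"
    by (simp add: sum.cartesian_product case_prod_beta apsnd_def map_prod_def sum_divide_distrib)
  finally show ?thesis .
qed

lemma cgf_decoupled: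
  assumes "\<And>w. (\<Sum>r\<in>sign_vectors n. f r w) = 0"
  shows "cgf (map_pmf (\<lambda>(r, w). f r w) (decoupled n z)) l =
    ln ((\<Sum>r\<in>sign_vectors n. \<Sum>r'\<in>sign_vectors n. exp (l * f r (Wout n z r')))
      / card (sign_vectors n) ^ 2)"
proof -
  have mean: "measure_pmf.expectation (map_pmf (\<lambda>(r, w). f r w) (decoupled n z)) (\<lambda>x. x) = 0"
    unfolding expectation_decoupled by (subst sum.swap) (simp add: assms)
  show ?thesis
    unfolding cgf_def mean unfolding expectation_decoupled by simp
qed

lemma sum_sign_vectors_Etil_i: "i \<in> {1..n} \<Longrightarrow> (\<Sum>r\<in>sign_vectors n. Etil_i z i r w) = 0"
  unfolding Etil_i_eq by (simp add: sum_distrib_right[symmetric] sum_sign_vectors_coord)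

lemma sum_sign_vectors_Etil: "(\<Sum>r\<in>sign_vectors n. Etil n z r w) = 0"
  unfolding Etil_def sum_divide_distrib[symmetric]
  by (subst sum.swap) (simp add: sum_sign_vectors_Etil_i)

lemma cgf_Etil_ge:
  assumes "0 \<le> l"
  shows "l * ((\<Sum>i=1..n. mean_abs_loss_gap n z i) / n) - ln (card (sign_vectors n))
    \<le> cgf (map_pmf (\<lambda>(r, w). Etil n z r w) (decoupled n z)) l"
proof -
  let ?S = "sign_vectors n"
  define x where "x w i = l * loss_gap (z i) w / n" for w i
  have abs_x: "(\<Sum>i=1..n. \<bar>x w i\<bar>) = l * ((\<Sum>i=1..n. \<bar>loss_gap (z i) w\<bar>) / n)" for w
    using assms by (simp add: x_def abs_mult sum_distrib_left sum_divide_distrib)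
  have Etil_x: "l * Etil n z r w = (\<Sum>i=1..n. r i * x w i)" for r w
    by (simp add: x_def Etil_eq sum_distrib_left sum_divide_distrib algebra_simps)
  have "(\<Sum>r'\<in>?S. \<Sum>i=1..n. \<bar>x (Wout n z r') i\<bar>) / card ?S + ln (1 / card ?S)
      \<le> ln ((\<Sum>r\<in>?S. \<Sum>r'\<in>?S. exp (l * Etil n z r (Wout n z r'))) / card ?S ^ 2)"
  proof (rule ln_double_mean_exp_ge)
    fix r'
    show "1 / card ?S * exp (\<Sum>i=1..n. \<bar>x (Wout n z r') i\<bar>)
        \<le> (\<Sum>r\<in>?S. exp (l * Etil n z r (Wout n z r'))) / card ?S"
      unfolding Etil_x using exp_sum_abs_le_sum_sign_vectors[where n=n and x="x (Wout n z r')"]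
      by (simp add: divide_right_mono)
  qed auto
  moreover have "(\<Sum>r'\<in>?S. \<Sum>i=1..n. \<bar>x (Wout n z r') i\<bar>) / card ?S
      = l * ((\<Sum>i=1..n. mean_abs_loss_gap n z i) / n)"
    unfolding abs_x mean_abs_loss_gap_def sum_distrib_left[symmetric] sum_divide_distrib[symmetric]
    by (subst sum.swap) simp
  ultimately show ?thesis
    by (simp add: cgf_decoupled sum_sign_vectors_Etil ln_div)
qed

lemma cgf_Etil_i_ge:
  assumes "i \<in> {1..n}" and "0 \<le> l"
  shows "l * mean_abs_loss_gap n z i - ln 2
    \<le> cgf (map_pmf (\<lambda>(r, w). Etil_i z i r w) (decoupled n z)) l"
proof -
  let ?S = "sign_vectors n"
  have "(\<Sum>r'\<in>?S. \<bar>l * loss_gap (z i) (Wout n z r')\<bar>) / card ?S + ln (1 / 2)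
      \<le> ln ((\<Sum>r\<in>?S. \<Sum>r'\<in>?S. exp (l * Etil_i z i r (Wout n z r'))) / card ?S ^ 2)"
  proof (rule ln_double_mean_exp_ge)
    fix r' assume "r' \<in> ?S"
    show "1 / 2 * exp \<bar>l * loss_gap (z i) (Wout n z r')\<bar>
        \<le> (\<Sum>r\<in>?S. exp (l * Etil_i z i r (Wout n z r'))) / card ?S"
      using sum_sign_vectors_exp_coord_ge[OF assms(1), of "l * loss_gap (z i) (Wout n z r')"]
      by (simp add: Etil_i_eq field_simps)
  qed auto
  moreover have "(\<Sum>r'\<in>?S. \<bar>l * loss_gap (z i) (Wout n z r')\<bar>) / card ?S
      = l * mean_abs_loss_gap n z i"
    using assms(2) by (simp add: mean_abs_loss_gap_def abs_mult sum_distrib_left)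
  ultimately show ?thesis
    by (simp add: cgf_decoupled sum_sign_vectors_Etil_i[OF assms(1)] ln_div)
qed

lemma mutual_info_Wout:
  assumes "inj_on (Wout n z) (sign_vectors n)"
  shows "mutual_info_pmf (map_pmf (\<lambda>r. (Wout n z r, r)) (Rdist n)) = ln (card (sign_vectors n))"
  unfolding Rdist_eq_pmf_of_set
  by (subst mutual_info_pmf_of_set_inj[OF _ _ assms, where c="1 / card (sign_vectors n)"])
     (auto simp: ln_div)

lemma mutual_info_Wout_coord:
  assumes "inj_on (Wout n z) (sign_vectors n)" and i: "i \<in> {1..n}"
  shows "mutual_info_pmf (map_pmf (\<lambda>r. (Wout n z r, r i)) (Rdist n)) = ln 2"
proof -
  have "pmf (map_pmf (\<lambda>r. r i) (pmf_of_set (sign_vectors n))) (r i) = 1 / 2"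
    if "r \<in> sign_vectors n" for r
    using card_sign_vectors_coord_eq[OF i sign_vectors_coord[OF that i]]
    by (simp add: pmf_map measure_pmf_of_set vimage_def Int_def conj_commute)
  then show ?thesis
    unfolding Rdist_eq_pmf_of_set
    by (subst mutual_info_pmf_of_set_inj[OF _ _ assms(1), where c="1 / 2"]) (auto simp: ln_div)
qed

lemma cgf_star_inv_Etil_ge:
  assumes "inj_on (Wout n z) (sign_vectors n)"
  shows "(\<Sum>i=1..n. mean_abs_loss_gap n z i) / n
    \<le> cgf_star_inv (map_pmf (\<lambda>(r, w). Etil n z r w) (decoupled n z))
         (mutual_info_pmf (map_pmf (\<lambda>r. (Wout n z r, r)) (Rdist n)))"
  unfolding mutual_info_Wout[OF assms] by (intro cgf_star_inv_ge cgf_Etil_ge) simp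

lemma cgf_star_inv_Etil_i_ge:
  assumes "inj_on (Wout n z) (sign_vectors n)" and "i \<in> {1..n}"
  shows "mean_abs_loss_gap n z i
    \<le> cgf_star_inv (map_pmf (\<lambda>(r, w). Etil_i z i r w) (decoupled n z))
         (mutual_info_pmf (map_pmf (\<lambda>r. (Wout n z r, r i)) (Rdist n)))"
  unfolding mutual_info_Wout_coord[OF assms] by (intro cgf_star_inv_ge cgf_Etil_i_ge assms(2)) simp

section \<open>Gaussian integrals\<close>

lemma prob_space_gauss: "0 < \<sigma> \<Longrightarrow> prob_space (gauss \<mu> \<sigma>)"
  unfolding gauss_def by (rule prob_space_normal_density)

lemma sets_gauss [simp, measurable_cong]: "sets (gauss \<mu> \<sigma>) = sets borel"
  unfolding gauss_def by simp

lemma space_gauss [simp]: "space (gauss \<mu> \<sigma>) = UNIV"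
  unfolding gauss_def by simp

lemma has_bochner_integral_gauss_id: "0 < \<sigma> \<Longrightarrow> has_bochner_integral (gauss \<mu> \<sigma>) (\<lambda>x. x) \<mu>"
  unfolding gauss_def has_bochner_integral_iff
  by (auto simp: integrable_density integral_density integrable_normal_moment_nz_1
      integral_normal_moment_nz_1)

lemma nn_integral_gauss_quadratic:
  assumes "0 < \<sigma>"
    and f_eq: "\<And>x. f x = p + q * \<bar>x - \<mu>\<bar> + t * (x - \<mu>) + r * (x - \<mu>)^2"
    and f_nonneg: "\<And>x. 0 \<le> f x"
  shows "(\<integral>\<^sup>+x. ennreal (f x) \<partial>gauss \<mu> \<sigma>) = ennreal (p + q * (\<sigma> * sqrt (2 / pi)) + r * \<sigma>^2)"
proof -
  note moments = normal_moment_even[OF assms(1), where k=0 and \<mu>=\<mu>]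
    normal_moment_abs_odd[OF assms(1), where k=0 and \<mu>=\<mu>]
    normal_moment_odd[OF assms(1), where k=0 and \<mu>=\<mu>]
    normal_moment_even[OF assms(1), where k=1 and \<mu>=\<mu>]
  have "has_bochner_integral lborel
      (\<lambda>x. p * normal_density \<mu> \<sigma> x + q * (normal_density \<mu> \<sigma> x * \<bar>x - \<mu>\<bar>)
        + t * (normal_density \<mu> \<sigma> x * (x - \<mu>)) + r * (normal_density \<mu> \<sigma> x * (x - \<mu>)^2))
      (p * 1 + q * (\<sigma> * sqrt (2 / pi)) + t * 0 + r * \<sigma>^2)"
    using moments by (intro has_bochner_integral_add has_bochner_integral_mult_right)
      (simp_all add: power2_eq_square)
  then have HB: "has_bochner_integral lborel (\<lambda>x. normal_density \<mu> \<sigma> x * f x)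
      (p + q * (\<sigma> * sqrt (2 / pi)) + r * \<sigma>^2)"
    by (simp add: f_eq algebra_simps)
  have "(\<integral>\<^sup>+x. ennreal (f x) \<partial>gauss \<mu> \<sigma>) = (\<integral>\<^sup>+x. ennreal (normal_density \<mu> \<sigma> x * f x) \<partial>lborel)"
    unfolding gauss_def using f_nonneg
    by (subst nn_integral_density) (auto simp: f_eq ennreal_mult intro!: nn_integral_cong)
  also have "\<dots> = ennreal (p + q * (\<sigma> * sqrt (2 / pi)) + r * \<sigma>^2)"
    using HB f_nonneg
    by (subst nn_integral_eq_integral) (auto simp: has_bochner_integral_iff)
  finally show ?thesis .
qed

abbreviation gauss_pair :: "real \<Rightarrow> real \<Rightarrow> (real \<times> real) measure" where
  "gauss_pair \<mu> \<sigma> \<equiv> gauss \<mu> \<sigma> \<Otimes>\<^sub>M gauss \<mu> \<sigma>"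

lemma prob_space_gauss_pair: "0 < \<sigma> \<Longrightarrow> prob_space (gauss_pair \<mu> \<sigma>)"
  by (intro prob_space_pair prob_space_gauss)

lemma product_sigma_finite_gauss_pair: "0 < \<sigma> \<Longrightarrow> product_sigma_finite (\<lambda>_. gauss_pair \<mu> \<sigma>)"
  by (simp add: product_sigma_finite_def prob_space_imp_sigma_finite prob_space_gauss_pair)

lemma nn_integral_gauss_pair_diff_sq:
  assumes "0 < \<sigma>"
  shows "(\<integral>\<^sup>+y. ennreal ((snd y - fst y)^2) \<partial>gauss_pair \<mu> \<sigma>) = ennreal (2 * \<sigma>^2)"
proof -
  interpret G: prob_space "gauss \<mu> \<sigma>" by (rule prob_space_gauss[OF assms])
  have "(\<integral>\<^sup>+y. ennreal ((snd y - fst y)^2) \<partial>gauss_pair \<mu> \<sigma>)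
      = (\<integral>\<^sup>+a. \<integral>\<^sup>+b. ennreal ((b - a)^2) \<partial>gauss \<mu> \<sigma> \<partial>gauss \<mu> \<sigma>)"
    by (subst G.nn_integral_fst[symmetric]) auto
  also have "\<dots> = (\<integral>\<^sup>+a. ennreal ((a - \<mu>)^2 + \<sigma>^2) \<partial>gauss \<mu> \<sigma>)"
  proof (intro nn_integral_cong)
    fix a
    have poly: "(b - a)^2
        = (a - \<mu>)^2 + 0 * \<bar>b - \<mu>\<bar> + (-2 * (a - \<mu>)) * (b - \<mu>) + 1 * (b - \<mu>)^2" for b
      by (simp add: power2_eq_square algebra_simps)
    show "(\<integral>\<^sup>+b. ennreal ((b - a)^2) \<partial>gauss \<mu> \<sigma>) = ennreal ((a - \<mu>)^2 + \<sigma>^2)"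
      by (subst nn_integral_gauss_quadratic[OF assms poly]) simp_all
  qed
  also have "\<dots> = ennreal (2 * \<sigma>^2)"
    by (subst nn_integral_gauss_quadratic[OF assms, where p="\<sigma>^2" and q=0 and t=0 and r=1]) auto
  finally show ?thesis .
qed

lemma sq_diff_abs_le_abs_mult:
  fixes a b \<mu> :: real
  shows "(\<bar>a - \<mu>\<bar> - \<bar>b - \<mu>\<bar>)^2 \<le> \<bar>b - a\<bar> * \<bar>a + b - 2 * \<mu>\<bar>"
proof -
  define u v where "u = \<bar>b - \<mu>\<bar>" and "v = \<bar>a - \<mu>\<bar>"
  have "0 \<le> u" "0 \<le> v"
    unfolding u_def v_def by simp_all
  have "u^2 - v^2 = (u - v) * (u + v)"
    by (simp add: power2_eq_square algebra_simps)
  have "(v - u)^2 = \<bar>u - v\<bar> * \<bar>u - v\<bar>"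
    by (simp add: power2_eq_square algebra_simps)
  also have "\<dots> \<le> \<bar>u - v\<bar> * (u + v)"
    using \<open>0 \<le> u\<close> \<open>0 \<le> v\<close> by (intro mult_left_mono) auto
  also have "\<dots> = \<bar>u^2 - v^2\<bar>"
    using \<open>u^2 - v^2 = (u - v) * (u + v)\<close> \<open>0 \<le> u\<close> \<open>0 \<le> v\<close> by (simp add: abs_mult)
  also have "\<dots> = \<bar>b - a\<bar> * \<bar>a + b - 2 * \<mu>\<bar>"
    unfolding u_def v_def by (simp add: power2_eq_square algebra_simps abs_mult[symmetric])
  finally show ?thesis
    unfolding u_def v_def .
qed

text \<open>For independent \<open>A, B \<sim> N(\<mu>, \<sigma>\<^sup>2)\<close>: \<open>E(\<bar>A - \<mu>\<bar> - \<bar>B - \<mu>\<bar>)\<^sup>2 = 2 \<sigma>\<^sup>2 - 2 (E \<bar>A - \<mu>\<bar>)\<^sup>2\<close>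
  with \<open>E \<bar>A - \<mu>\<bar> = \<sigma> sqrt (2/\<pi>)\<close>.\<close>

lemma nn_integral_gauss_pair_sq_diff_abs:
  assumes "0 < \<sigma>"
  shows "(\<integral>\<^sup>+y. ennreal ((\<bar>fst y - \<mu>\<bar> - \<bar>snd y - \<mu>\<bar>)^2) \<partial>gauss_pair \<mu> \<sigma>)
    = ennreal ((2 - 4 / pi) * \<sigma>^2)"
proof -
  interpret G: prob_space "gauss \<mu> \<sigma>" by (rule prob_space_gauss[OF assms])
  define m where "m = \<sigma> * sqrt (2 / pi)"
  have m_sq: "m^2 = 2 / pi * \<sigma>^2"
    unfolding m_def by (simp add: power_mult_distrib)
  have "2 * \<sigma>^2 \<le> pi * \<sigma>^2"
    using pi_gt3 by (intro mult_right_mono) auto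
  then have m_le: "m^2 \<le> \<sigma>^2"
    unfolding m_sq by (simp add: field_simps)
  have "(\<integral>\<^sup>+y. ennreal ((\<bar>fst y - \<mu>\<bar> - \<bar>snd y - \<mu>\<bar>)^2) \<partial>gauss_pair \<mu> \<sigma>)
      = (\<integral>\<^sup>+a. \<integral>\<^sup>+b. ennreal ((\<bar>a - \<mu>\<bar> - \<bar>b - \<mu>\<bar>)^2) \<partial>gauss \<mu> \<sigma> \<partial>gauss \<mu> \<sigma>)"
    by (subst G.nn_integral_fst[symmetric]) auto
  also have "\<dots> = (\<integral>\<^sup>+a. ennreal ((\<bar>a - \<mu>\<bar> - m)^2 + (\<sigma>^2 - m^2)) \<partial>gauss \<mu> \<sigma>)"
  proof (intro nn_integral_cong)
    fix a
    have poly: "(\<bar>a - \<mu>\<bar> - \<bar>b - \<mu>\<bar>)^2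
        = \<bar>a - \<mu>\<bar>^2 + (-2 * \<bar>a - \<mu>\<bar>) * \<bar>b - \<mu>\<bar> + 0 * (b - \<mu>) + 1 * (b - \<mu>)^2" for b
      by (simp add: power2_eq_square algebra_simps)
    show "(\<integral>\<^sup>+b. ennreal ((\<bar>a - \<mu>\<bar> - \<bar>b - \<mu>\<bar>)^2) \<partial>gauss \<mu> \<sigma>)
        = ennreal ((\<bar>a - \<mu>\<bar> - m)^2 + (\<sigma>^2 - m^2))"
      by (subst nn_integral_gauss_quadratic[OF assms poly])
        (simp, simp add: m_def power2_eq_square algebra_simps)
  qed
  also have "\<dots> = ennreal (\<sigma>^2 - 2 * m * m + \<sigma>^2)"
  proof -
    have poly: "(\<bar>a - \<mu>\<bar> - m)^2 + (\<sigma>^2 - m^2) = \<sigma>^2 + (-2 * m) * \<bar>a - \<mu>\<bar> + 0 * (a - \<mu>) + 1 * (a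
        - \<mu>)^2"
      for a
      by (simp add: power2_eq_square algebra_simps)
    show ?thesis
      using m_le by (subst nn_integral_gauss_quadratic[OF assms poly])
        (simp_all add: m_def add_nonneg_nonneg)
  qed
  also have "\<sigma>^2 - 2 * m * m + \<sigma>^2 = (2 - 4 / pi) * \<sigma>^2"
    unfolding mult.assoc power2_eq_square[symmetric] m_sq by (simp add: algebra_simps)
  finally show ?thesis .
qed

lemma nn_integral_gauss_pair_abs_mult_ge:
  assumes "0 < \<sigma>"
  shows "ennreal ((2 - 4 / pi) * \<sigma>^2)
    \<le> (\<integral>\<^sup>+y. ennreal (\<bar>snd y - fst y\<bar> * \<bar>fst y + snd y - 2 * \<mu>\<bar>) \<partial>gauss_pair \<mu> \<sigma>)"
  unfolding nn_integral_gauss_pair_sq_diff_abs[OF assms, where \<mu>=\<mu>, symmetric]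
  by (intro nn_integral_mono ennreal_leI sq_diff_abs_le_abs_mult)

lemma has_bochner_integral_gauss_pair_sum:
  assumes "0 < \<sigma>"
  shows "has_bochner_integral (gauss_pair \<mu> \<sigma>) (\<lambda>y. fst y + snd y) (\<mu> + \<mu>)"
proof (rule has_bochner_integral_add)
  interpret G: prob_space "gauss \<mu> \<sigma>" by (rule prob_space_gauss[OF assms])
  interpret GG: pair_sigma_finite "gauss \<mu> \<sigma>" "gauss \<mu> \<sigma>" ..
  note gauss_id = has_bochner_integral_gauss_id[OF assms]
  show "has_bochner_integral (gauss_pair \<mu> \<sigma>) fst \<mu>"
    by (rule has_bochner_integral_distr_eq[OF G.distr_pair_fst measurable_fst _ gauss_id]) simp
  have "distr (gauss_pair \<mu> \<sigma>) (gauss \<mu> \<sigma>) snd = gauss \<mu> \<sigma>"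
    by (subst GG.distr_pair_swap) (simp add: distr_distr comp_def case_prod_beta G.distr_pair_fst)
  then show "has_bochner_integral (gauss_pair \<mu> \<sigma>) snd \<mu>"
    by (rule has_bochner_integral_distr_eq[OF _ measurable_snd _ gauss_id]) simp
qed

lemma AE_gauss_pair_diff_neq:
  assumes "0 < \<sigma>"
  shows "AE y in gauss_pair \<mu> \<sigma>. snd y - fst y \<noteq> t"
proof -
  interpret G: prob_space "gauss \<mu> \<sigma>" by (rule prob_space_gauss[OF assms])
  interpret GG: pair_sigma_finite "gauss \<mu> \<sigma>" "gauss \<mu> \<sigma>" ..
  have point: "AE b in gauss \<mu> \<sigma>. b \<noteq> a + t" for a
    unfolding gauss_def using AE_lborel_singleton[of "a + t"]
    by (subst AE_density) (auto elim: AE_mp)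
  show ?thesis
  proof (rule GG.AE_pair_measure)
    show "{y \<in> space (gauss_pair \<mu> \<sigma>). snd y - fst y \<noteq> t} \<in> sets (gauss_pair \<mu> \<sigma>)"
      by measurable
    show "AE a in gauss \<mu> \<sigma>. AE b in gauss \<mu> \<sigma>. snd (a, b) - fst (a, b) \<noteq> t"
    proof (rule AE_I2)
      fix a
      show "AE b in gauss \<mu> \<sigma>. snd (a, b) - fst (a, b) \<noteq> t"
        using point[of a] by eventually_elim auto
    qed
  qed
qed

section \<open>Expected loss gaps under the supersample\<close>

text \<open>Given the \<open>i\<close>-th pair \<open>y\<close>, the other pairs enter only through their sum \<open>T\<close>, of mean
  \<open>2 \<mu> (n - 1)\<close>; Jensen's inequality for \<open>\<bar>_\<bar>\<close> leaves the loss gap at the conditional mean.\<close>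

lemma nn_integral_abs_loss_gap_section_ge:
  assumes "0 < \<sigma>" and i: "i \<in> {1..n}"
  shows "ennreal ((1 - 1 / n) * (\<bar>snd y - fst y\<bar> * \<bar>fst y + snd y - 2 * \<mu>\<bar>))
    \<le> (\<integral>\<^sup>+x. ennreal \<bar>loss_gap y (supersample_mean n (x(i := y)))\<bar>
          \<partial>PiM ({1..n} - {i}) (\<lambda>_. gauss_pair \<mu> \<sigma>))"
proof -
  define J where "J = {1..n} - {i}"
  define P where "P = PiM J (\<lambda>_. gauss_pair \<mu> \<sigma>)"
  define d where "d = snd y - fst y"
  define s where "s = fst y + snd y"
  define T where "T x = (\<Sum>j\<in>J. fst (x j) + snd (x j))" for x :: "nat \<Rightarrow> real \<times> real"
  interpret P: prob_space P
    unfolding P_def by (intro prob_space_PiM prob_space_gauss_pair assms(1))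
  have n: "0 < real n"
    using i by simp
  have gap: "loss_gap y (supersample_mean n (x(i := y)))
      = d / n * T x + - (d / n * ((real n - 1) * s))"
    for x
  proof -
    have "(\<Sum>j=1..n. fst ((x(i := y)) j) + snd ((x(i := y)) j)) = s + T x"
      unfolding s_def T_def J_def using i by (subst sum.remove[of "{1..n}" i]) auto
    then show ?thesis
      using n by (simp add: loss_gap_def supersample_mean_def d_def s_def field_simps)
  qed
  have "has_bochner_integral P T (card J * (\<mu> + \<mu>))"
    unfolding T_def P_def J_def using assms(1)
    by (intro has_bochner_integral_PiM_sum prob_space_gauss_pair
        has_bochner_integral_gauss_pair_sum) auto
  then have "has_bochner_integral P T ((real n - 1) * (\<mu> + \<mu>))"
    using i by (simp add: J_def of_nat_diff)
  then have "ennreal \<bar>d / n * ((real n - 1) * (\<mu> + \<mu>)) + - (d / n * ((real n - 1) * s))\<bar>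
      \<le> (\<integral>\<^sup>+x. ennreal \<bar>loss_gap y (supersample_mean n (x(i := y)))\<bar> \<partial>P)"
    unfolding gap by (rule P.abs_affine_mean_le_nn_integral)
  moreover have "d / n * ((real n - 1) * (\<mu> + \<mu>)) + - (d / n * ((real n - 1) * s))
      = - ((1 - 1 / n) * (d * (s - 2 * \<mu>)))"
    using n by (simp add: field_simps)
  moreover have "0 \<le> 1 - 1 / real n"
    using n i by (simp add: field_simps)
  ultimately show ?thesis
    unfolding P_def J_def by (simp add: abs_mult d_def s_def)
qed

lemma nn_integral_abs_loss_gap_supersample_mean_ge:
  assumes "0 < \<sigma>" and "2 \<le> n" and i: "i \<in> {1..n}"
  shows "ennreal ((1 - 1 / n) * ((2 - 4 / pi) * \<sigma>^2))
    \<le> (\<integral>\<^sup>+z. ennreal \<bar>loss_gap (z i) (supersample_mean n z)\<bar> \<partial>supersample n \<mu> \<sigma>)"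
proof -
  interpret PS: product_sigma_finite "\<lambda>_. gauss_pair \<mu> \<sigma>"
    by (rule product_sigma_finite_gauss_pair[OF assms(1)])
  have c: "0 \<le> 1 - 1 / real n"
    using assms(2) by (simp add: field_simps)
  have "ennreal ((1 - 1 / n) * ((2 - 4 / pi) * \<sigma>^2))
      \<le> ennreal (1 - 1 / n) * (\<integral>\<^sup>+y. ennreal (\<bar>snd y - fst y\<bar> * \<bar>fst y + snd y - 2 * \<mu>\<bar>)
          \<partial>gauss_pair \<mu> \<sigma>)"
    unfolding ennreal_mult'[OF c]
    by (intro mult_left_mono nn_integral_gauss_pair_abs_mult_ge assms(1)) simp
  also have "\<dots> = (\<integral>\<^sup>+y. ennreal ((1 - 1 / n) * (\<bar>snd y - fst y\<bar> * \<bar>fst y + snd y - 2 * \<mu>\<bar>))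
      \<partial>gauss_pair \<mu> \<sigma>)"
    unfolding ennreal_mult'[OF c] by (rule nn_integral_cmult[symmetric]) measurable
  also have "\<dots> \<le> (\<integral>\<^sup>+y. \<integral>\<^sup>+x. ennreal \<bar>loss_gap y (supersample_mean n (x(i := y)))\<bar>
      \<partial>PiM ({1..n} - {i}) (\<lambda>_. gauss_pair \<mu> \<sigma>) \<partial>gauss_pair \<mu> \<sigma>)"
    by (intro nn_integral_mono nn_integral_abs_loss_gap_section_ge assms(1) i)
  also have "\<dots> = (\<integral>\<^sup>+z. ennreal \<bar>loss_gap (z i) (supersample_mean n z)\<bar> \<partial>supersample n \<mu> \<sigma>)"
    unfolding supersample_def using i
    by (subst PS.nn_integral_PiM_split_coord[of "{1..n}" i])
      (auto simp: loss_gap_def supersample_mean_def)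
  finally show ?thesis .
qed

lemma nn_integral_mean_abs_loss_gap_one:
  assumes "0 < \<sigma>"
  shows "(\<integral>\<^sup>+z. ennreal (mean_abs_loss_gap 1 z 1) \<partial>supersample 1 \<mu> \<sigma>) = ennreal (2 * \<sigma>^2)"
proof -
  interpret PS: product_sigma_finite "\<lambda>_. gauss_pair \<mu> \<sigma>"
    by (rule product_sigma_finite_gauss_pair[OF assms])
  have "(\<integral>\<^sup>+z. ennreal (mean_abs_loss_gap 1 z 1) \<partial>supersample 1 \<mu> \<sigma>)
      = (\<integral>\<^sup>+z. ennreal ((snd (z 1) - fst (z 1))^2) \<partial>PiM {1::nat} (\<lambda>_. gauss_pair \<mu> \<sigma>))"
    unfolding mean_abs_loss_gap_one supersample_def by simp
  also have "\<dots> = (\<integral>\<^sup>+y. ennreal ((snd y - fst y)^2) \<partial>gauss_pair \<mu> \<sigma>)"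
    by (rule PS.product_nn_integral_singleton[where f="\<lambda>y. ennreal ((snd y - fst y)^2)"]) measurable
  also have "\<dots> = ennreal (2 * \<sigma>^2)"
    by (rule nn_integral_gauss_pair_diff_sq[OF assms])
  finally show ?thesis .
qed

text \<open>For \<open>n = 1\<close> the supersample mean is the midpoint of the only pair, where the loss gap
  vanishes; that case is computed directly.\<close>

lemma nn_integral_mean_abs_loss_gap_ge:
  assumes "0 < \<sigma>" and "1 \<le> n" and i: "i \<in> {1..n}"
  shows "ennreal (\<sigma>^2 / pi) \<le> (\<integral>\<^sup>+z. ennreal (mean_abs_loss_gap n z i) \<partial>supersample n \<mu> \<sigma>)"
proof (cases "n = 1")
  case True
  have "\<sigma>^2 / pi \<le> 2 * \<sigma>^2"
    using mult_right_mono[of 1 "2 * pi" "\<sigma>^2"] pi_gt3 by (simp add: field_simps)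
  then show ?thesis
    using True i nn_integral_mean_abs_loss_gap_one[OF assms(1)] by (simp add: ennreal_leI)
next
  case False
  then have "2 \<le> n"
    using assms(2) by simp
  have "\<sigma>^2 / pi \<le> (1 / 2) * ((2 - 4 / pi) * \<sigma>^2)"
    using pi_gt3 by (simp add: field_simps mult_right_mono)
  also have "\<dots> \<le> (1 - 1 / n) * ((2 - 4 / pi) * \<sigma>^2)"
  proof (rule mult_right_mono)
    show "1 / 2 \<le> 1 - 1 / real n"
      using \<open>2 \<le> n\<close> by (simp add: field_simps)
    have "4 / pi \<le> 2"
      using pi_gt3 by (simp add: field_simps)
    then show "0 \<le> (2 - 4 / pi) * \<sigma>^2"
      by simp
  qed
  finally have "ennreal (\<sigma>^2 / pi) \<le> ennreal ((1 - 1 / n) * ((2 - 4 / pi) * \<sigma>^2))"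
    by (rule ennreal_leI)
  also have "\<dots> \<le> (\<integral>\<^sup>+z. ennreal \<bar>loss_gap (z i) (supersample_mean n z)\<bar> \<partial>supersample n \<mu> \<sigma>)"
    by (rule nn_integral_abs_loss_gap_supersample_mean_ge[OF assms(1) \<open>2 \<le> n\<close> i])
  also have "\<dots> \<le> (\<integral>\<^sup>+z. ennreal (mean_abs_loss_gap n z i) \<partial>supersample n \<mu> \<sigma>)"
    using assms(2) by (intro nn_integral_mono ennreal_leI abs_loss_gap_supersample_mean_le)
  finally show ?thesis .
qed

section \<open>Almost sure injectivity of the output\<close>

lemma AE_Wout_neq:
  assumes "0 < \<sigma>" and r: "r \<in> sign_vectors n" "r' \<in> sign_vectors n" "r \<noteq> r'"
  shows "AE z in supersample n \<mu> \<sigma>. Wout n z r \<noteq> Wout n z r'"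
proof -
  interpret PS: product_sigma_finite "\<lambda>_. gauss_pair \<mu> \<sigma>"
    by (rule product_sigma_finite_gauss_pair[OF assms(1)])
  obtain i where i: "i \<in> {1..n}" "r i \<noteq> r' i"
    using r unfolding sign_vectors_def by (metis PiE_ext)
  have ri: "r i = -1 \<or> r i = 1" "r' i = -1 \<or> r' i = 1"
    using sign_vectors_coord i(1) r by blast+
  define k where "k x = (\<Sum>j\<in>{1..n} - {i}. sel (x j) (r j) - sel (x j) (r' j))"
    for x :: "nat \<Rightarrow> real \<times> real"
  have Wout_diff: "real n * (Wout n x r - Wout n x r') = r i * (snd (x i) - fst (x i)) + k x" for x
  proof -
    have "real n * (Wout n x r - Wout n x r') = (\<Sum>j=1..n. sel (x j) (r j) - sel (x j) (r' j))"
      using i(1) by (simp add: Wout_def sum_subtractf diff_divide_distrib[symmetric])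
    also have "\<dots> = (sel (x i) (r i) - sel (x i) (r' i)) + k x"
      unfolding k_def using i(1) by (subst sum.remove[of "{1..n}" i]) simp_all
    finally show ?thesis
      using ri i(2) by (auto simp: sel_def)
  qed
  have "AE y in gauss_pair \<mu> \<sigma>. Wout n (x(i := y)) r \<noteq> Wout n (x(i := y)) r'" for x
    using AE_gauss_pair_diff_neq[OF assms(1), where \<mu>=\<mu> and t="- r i * k x"]
  proof eventually_elim
    case (elim y)
    have "k (x(i := y)) = k x"
      unfolding k_def by (intro sum.cong) auto
    then have "real n * (Wout n (x(i := y)) r - Wout n (x(i := y)) r')
        = r i * (snd y - fst y + r i * k x)"
      using Wout_diff[of "x(i := y)"] ri by (auto simp: algebra_simps)
    moreover have "snd y - fst y + r i * k x \<noteq> 0"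
      using elim ri by auto
    ultimately show ?case
      using ri by auto
  qed
  moreover have "(\<lambda>z. Wout n z s) \<in> borel_measurable (PiM {1..n} (\<lambda>_. gauss_pair \<mu> \<sigma>))" for s
    unfolding Wout_def sel_def by measurable
  then have "{z \<in> space (PiM {1..n} (\<lambda>_. gauss_pair \<mu> \<sigma>)). \<not> Wout n z r \<noteq> Wout n z r'}
      \<in> sets (PiM {1..n} (\<lambda>_. gauss_pair \<mu> \<sigma>))"
    using measurable_equality_set by simp
  ultimately show ?thesis
    unfolding supersample_def using i(1) by (intro PS.AE_PiM_split_coord) auto
qed

lemma AE_inj_on_Wout:
  assumes "0 < \<sigma>"
  shows "AE z in supersample n \<mu> \<sigma>. inj_on (Wout n z) (sign_vectors n)"
proof -
  have "AE z in supersample n \<mu> \<sigma>.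
      \<forall>r\<in>sign_vectors n. \<forall>r'\<in>sign_vectors n. r \<noteq> r' \<longrightarrow> Wout n z r \<noteq> Wout n z r'"
    using AE_Wout_neq[OF assms] by (intro eventually_ball_finite ballI) (auto elim: AE_mp)
  then show ?thesis
    by eventually_elim (auto intro!: inj_onI)
qed

lemma nn_integral_cgf_star_inv_Etil_i_ge:
  assumes "0 < \<sigma>" and "1 \<le> n" and i: "i \<in> {1..n}"
  shows "ennreal (\<sigma>^2 / pi)
    \<le> (\<integral>\<^sup>+ z. ennreal (cgf_star_inv (map_pmf (\<lambda>(r, w). Etil_i z i r w) (decoupled n z))
          (mutual_info_pmf (map_pmf (\<lambda>r. (Wout n z r, r i)) (Rdist n)))) \<partial>supersample n \<mu> \<sigma>)"
proof -
  have "AE z in supersample n \<mu> \<sigma>. ennreal (mean_abs_loss_gap n z i)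
      \<le> ennreal (cgf_star_inv (map_pmf (\<lambda>(r, w). Etil_i z i r w) (decoupled n z))
          (mutual_info_pmf (map_pmf (\<lambda>r. (Wout n z r, r i)) (Rdist n))))"
    using AE_inj_on_Wout[OF assms(1), where n=n and \<mu>=\<mu>]
    by eventually_elim (intro ennreal_leI cgf_star_inv_Etil_i_ge i)
  with nn_integral_mean_abs_loss_gap_ge[OF assms] show ?thesis
    by (blast intro: order_trans nn_integral_mono_AE)
qed

lemma nn_integral_cgf_star_inv_Etil_ge:
  assumes "0 < \<sigma>" and "1 \<le> n"
  shows "ennreal (\<sigma>^2 / pi)
    \<le> (\<integral>\<^sup>+ z. ennreal (cgf_star_inv (map_pmf (\<lambda>(r, w). Etil n z r w) (decoupled n z))
          (mutual_info_pmf (map_pmf (\<lambda>r. (Wout n z r, r)) (Rdist n)))) \<partial>supersample n \<mu> \<sigma>)"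
proof -
  have meas: "(\<lambda>z. ennreal (mean_abs_loss_gap n z i)) \<in> borel_measurable (supersample n \<mu> \<sigma>)"
    if "i \<in> {1..n}" for i
    using that unfolding mean_abs_loss_gap_def loss_gap_def Wout_def sel_def supersample_def
    by measurable
  have "ennreal (\<sigma>^2 / pi)
      \<le> ennreal (1 / real n) * (\<Sum>i=1..n. \<integral>\<^sup>+z. ennreal (mean_abs_loss_gap n z i) \<partial>supersample n \<mu> \<sigma>)"
    using assms by (intro ennreal_le_mean nn_integral_mean_abs_loss_gap_ge)
  also have "\<dots> = ennreal (1 / real n) *
      (\<integral>\<^sup>+z. (\<Sum>i=1..n. ennreal (mean_abs_loss_gap n z i)) \<partial>supersample n \<mu> \<sigma>)"
    by (subst nn_integral_sum) (auto intro: meas)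
  also have "\<dots> = (\<integral>\<^sup>+z. ennreal (1 / real n) * (\<Sum>i=1..n. ennreal (mean_abs_loss_gap n z i))
      \<partial>supersample n \<mu> \<sigma>)"
    by (rule nn_integral_cmult[symmetric]) (intro borel_measurable_sum meas)
  also have "\<dots> = (\<integral>\<^sup>+z. ennreal ((\<Sum>i=1..n. mean_abs_loss_gap n z i) / n) \<partial>supersample n \<mu> \<sigma>)"
    by (intro nn_integral_cong)
      (simp add: sum_ennreal mean_abs_loss_gap_nonneg sum_nonneg ennreal_mult'[symmetric])
  also have "\<dots> \<le> (\<integral>\<^sup>+ z. ennreal (cgf_star_inv (map_pmf (\<lambda>(r, w). Etil n z r w) (decoupled n z))
          (mutual_info_pmf (map_pmf (\<lambda>r. (Wout n z r, r)) (Rdist n)))) \<partial>supersample n \<mu> \<sigma>)"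
    by (rule nn_integral_mono_AE)
      (use AE_inj_on_Wout[OF assms(1)] in \<open>eventually_elim, intro ennreal_leI cgf_star_inv_Etil_ge\<close>)
  finally show ?thesis .
qed

lemma sq_div_pi_sqrt_log2_e_le: "\<sigma>^2 / (pi * sqrt (log 2 (exp 1))) \<le> \<sigma>^2 / pi"
proof -
  have "ln 2 \<le> (1 :: real)"
    using ln_le_minus_one[of 2] by simp
  then have "1 \<le> sqrt (log 2 (exp 1))"
    by (simp add: log_def)
  then show ?thesis
    by (intro divide_left_mono) (auto intro: mult_pos_pos)
qed

theorem proposition1:
  fixes n :: nat and \<mu> \<sigma> :: real
  assumes "n \<ge> 1" and "\<sigma> > 0"
  shows "((\<integral>\<^sup>+ z. ennreal (cgf_star_inv
              (map_pmf (\<lambda>(r, w). Etil n z r w) (decoupled n z))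
              (mutual_info_pmf (map_pmf (\<lambda>r. (Wout n z r, r)) (Rdist n))))
            \<partial>supersample n \<mu> \<sigma>)
         \<ge> ennreal (\<sigma>^2 / (pi * sqrt (log 2 (exp 1))))) \<and>
         (ennreal (1 / real n) *
           (\<Sum>i=1..n. \<integral>\<^sup>+ z. ennreal (cgf_star_inv
              (map_pmf (\<lambda>(r, w). Etil_i z i r w) (decoupled n z))
              (mutual_info_pmf (map_pmf (\<lambda>r. (Wout n z r, r i)) (Rdist n))))
            \<partial>supersample n \<mu> \<sigma>)
         \<ge> ennreal (\<sigma>^2 / (pi * sqrt (log 2 (exp 1)))))"
proof -
  have weaker: "ennreal (\<sigma>^2 / (pi * sqrt (log 2 (exp 1)))) \<le> ennreal (\<sigma>^2 / pi)"
    by (rule ennreal_leI[OF sq_div_pi_sqrt_log2_e_le])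
  have "ennreal (\<sigma>^2 / (pi * sqrt (log 2 (exp 1))))
      \<le> (\<integral>\<^sup>+ z. ennreal (cgf_star_inv (map_pmf (\<lambda>(r, w). Etil n z r w) (decoupled n z))
          (mutual_info_pmf (map_pmf (\<lambda>r. (Wout n z r, r)) (Rdist n)))) \<partial>supersample n \<mu> \<sigma>)"
    by (rule order_trans[OF weaker nn_integral_cgf_star_inv_Etil_ge[OF assms(2,1)]])
  moreover have "ennreal (\<sigma>^2 / (pi * sqrt (log 2 (exp 1))))
      \<le> ennreal (1 / real n) * (\<Sum>i=1..n. \<integral>\<^sup>+ z. ennreal (cgf_star_inv
          (map_pmf (\<lambda>(r, w). Etil_i z i r w) (decoupled n z))
          (mutual_info_pmf (map_pmf (\<lambda>r. (Wout n z r, r i)) (Rdist n)))) \<partial>supersample n \<mu> \<sigma>)"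
    by (rule ennreal_le_mean[OF assms(1)
          order_trans[OF weaker nn_integral_cgf_star_inv_Etil_i_ge[OF assms(2,1)]]])
  ultimately show ?thesis
    by simp
qed

end
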